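(* Consider a wave sequence $U_L\xrightarrow{S}U_M\xrightarrow{C}U_R$ with $U_L\neq U_R$, consisting of an admissible $S$-wave from $U_L$ to $U_M$ followed by an admissible $C$-wave from $U_M$ to $U_R$. This wave sequence is compatible if and only if $U_M\in\mathcal{R}\cup\mathcal{T}$ and $S^k(U_M)\le S_L\le 1$.
   Context: System: $\partial_t S+\partial_x f(S,C)=0$, $\partial_t[(S+\mathcal{A})C]+\partial_x[f(S,C)C]=0$, with $\mathcal{A}>0$ constant and states $U=(S,C)\in[0,1]^2$. The flux $f$ satisfies: (a) $f\in\mathscr{C}^2$, $f(0,C)=0$, $f(1,C)=1$, $\partial_Sf(0,C)=\partial_Sf(1,C)=0$; (b) for each $C$, $f(\cdot,C)$ is strictly increasing and S-shaped with a single inflection point (convex then concave); (c) $\partial_Cf>0$ for $0<S<1$. Eigenvalues: $\lambda_C(S,C)=f(S,C)/(S+\mathcal{A})$, $\lambda_S(S,C)=\partial_Sf(S,C)$. Transition curve $\mathcal{T}=\{\lambda_S=\lambda_C\}$, $\mathcal{L}=\{\lambda_S>\lambda_C\}$, $\mathcal{R}=\{\lambda_S<\lambda_C\}$; for each $C$, $\mathcal{T}$ contains exactly one point $(S^*(C),C)$ with $S^*(C)\in(0,1)$. For a state $U=(S,C)$, $S^k(U)$ denotes the value $S'\in[0,1]$, $S'\ne S$, with $\lambda_C(S',C)=\lambda_C(U)$ (it lies on the opposite side of $\mathcal{T}$ from $U$); $S^k(U)=+\infty$ if no such $S'$ exists, and $S^k(U)=S^*(C)$ if $S=S^*(C)$.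 An $S$-wave from $U_1$ to $U_2$ requires $C_1=C_2=C$ and is the solution of the scalar Riemann problem $\partial_tS+\partial_xf(S,C)=0$ with left state $S_1$, right state $S_2$, built from shocks satisfying Oleinik's entropy condition and rarefactions; its initial velocity $v_i$ and final velocity $v_f$ are the smallest and largest propagation speeds in that wave fan. A $C$-wave from $U_1$ to $U_2$ is a contact discontinuity with $\lambda_C(U_1)=\lambda_C(U_2)$, travelling with speed $v_i=v_f=\lambda_C(U_1)$; it is admissible iff $U_1,U_2$ both lie in $\mathcal{L}\cup\mathcal{T}$ or both in $\mathcal{R}\cup\mathcal{T}$. A sequence $U_1\xrightarrow{a}U_2\xrightarrow{b}U_3$ is compatible iff $v_f^a\le v_i^b$. *)

theory Defs
  imports "HOL-Analysis.Analysis"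
begin

definition C2_at :: "(real \<Rightarrow> real \<Rightarrow> real) \<Rightarrow> (real \<times> real) set \<Rightarrow> bool" where
  "C2_at f D \<longleftrightarrow>
     (\<exists>F' :: real \<times> real \<Rightarrow> ((real \<times> real) \<Rightarrow>\<^sub>L real).
      \<exists>F'' :: real \<times> real \<Rightarrow> ((real \<times> real) \<Rightarrow>\<^sub>L ((real \<times> real) \<Rightarrow>\<^sub>L real)).
        (\<forall>x\<in>D. ((\<lambda>p. f (fst p) (snd p)) has_derivative blinfun_apply (F' x)) (at x)) \<and>
        (\<forall>x\<in>D. (F' has_derivative blinfun_apply (F'' x)) (at x)) \<and>
        continuous_on D F' \<and> continuous_on D F'')"

definition strict_convex_on :: "real set \<Rightarrow> (real \<Rightarrow> real) \<Rightarrow> bool" where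
  "strict_convex_on S g \<longleftrightarrow>
     (\<forall>x\<in>S. \<forall>y\<in>S. \<forall>u::real. x \<noteq> y \<and> 0 < u \<and> u < 1 \<longrightarrow>
        g ((1 - u) * x + u * y) < (1 - u) * g x + u * g y)"

definition strict_concave_on :: "real set \<Rightarrow> (real \<Rightarrow> real) \<Rightarrow> bool" where
  "strict_concave_on S g \<longleftrightarrow> strict_convex_on S (\<lambda>x. - g x)"

definition lamS :: "(real \<Rightarrow> real \<Rightarrow> real) \<Rightarrow> real \<Rightarrow> real \<Rightarrow> real" where
  "lamS f S C = deriv (\<lambda>s. f s C) S"

definition dC :: "(real \<Rightarrow> real \<Rightarrow> real) \<Rightarrow> real \<Rightarrow> real \<Rightarrow> real" where
  "dC f S C = deriv (\<lambda>c. f S c) C"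

definition lamC :: "(real \<Rightarrow> real \<Rightarrow> real) \<Rightarrow> real \<Rightarrow> real \<Rightarrow> real \<Rightarrow> real" where
  "lamC f A S C = f S C / (S + A)"

definition flux_hyp :: "(real \<Rightarrow> real \<Rightarrow> real) \<Rightarrow> bool" where
  "flux_hyp f \<longleftrightarrow>
     C2_at f ({0..1} \<times> {0..1}) \<and>
     (\<forall>C\<in>{0..1}. f 0 C = 0 \<and> f 1 C = 1 \<and> lamS f 0 C = 0 \<and> lamS f 1 C = 0) \<and>
     (\<forall>C\<in>{0..1}. strict_mono_on {0..1} (\<lambda>S. f S C) \<and>
        (\<exists>s0\<in>{0<..<1}. strict_convex_on {0..s0} (\<lambda>S. f S C) \<and>
                        strict_concave_on {s0..1} (\<lambda>S. f S C))) \<and>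
     (\<forall>S\<in>{0<..<1}. \<forall>C\<in>{0..1}. dC f S C > 0)"

definition inL :: "(real \<Rightarrow> real \<Rightarrow> real) \<Rightarrow> real \<Rightarrow> real \<times> real \<Rightarrow> bool" where
  "inL f A U \<longleftrightarrow> lamS f (fst U) (snd U) > lamC f A (fst U) (snd U)"

definition inR :: "(real \<Rightarrow> real \<Rightarrow> real) \<Rightarrow> real \<Rightarrow> real \<times> real \<Rightarrow> bool" where
  "inR f A U \<longleftrightarrow> lamS f (fst U) (snd U) < lamC f A (fst U) (snd U)"

definition inT :: "(real \<Rightarrow> real \<Rightarrow> real) \<Rightarrow> real \<Rightarrow> real \<times> real \<Rightarrow> bool" where
  "inT f A U \<longleftrightarrow> lamS f (fst U) (snd U) = lamC f A (fst U) (snd U)"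

definition Sstar :: "(real \<Rightarrow> real \<Rightarrow> real) \<Rightarrow> real \<Rightarrow> real \<Rightarrow> real" where
  "Sstar f A C = (THE s. s \<in> {0<..<1} \<and> inT f A (s, C))"

definition Sk :: "(real \<Rightarrow> real \<Rightarrow> real) \<Rightarrow> real \<Rightarrow> real \<times> real \<Rightarrow> ereal" where
  "Sk f A U =
     (let S = fst U; C = snd U in
      if S = Sstar f A C then ereal (Sstar f A C)
      else if (\<exists>S'\<in>{0..1}. S' \<noteq> S \<and> lamC f A S' C = lamC f A S C)
      then ereal (THE S'. S' \<in> {0..1} \<and> S' \<noteq> S \<and> lamC f A S' C = lamC f A S C)
      else \<infinity>)"

text \<open>The Oleinik entropy
  solution of the scalar Riemann problem with left state a < right state b has
  the states s in [a,b] travelling with speeds given by the derivative of the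
  lower convex envelope (shocks = linear pieces, rarefactions = contact with g);
  for left state > right state the upper concave envelope is used.\<close>
definition lower_env :: "(real \<Rightarrow> real) \<Rightarrow> real \<Rightarrow> real \<Rightarrow> real \<Rightarrow> real" where
  "lower_env g a b s = Sup {m * s + c | m c. \<forall>x\<in>{a..b}. m * x + c \<le> g x}"

definition upper_env :: "(real \<Rightarrow> real) \<Rightarrow> real \<Rightarrow> real \<Rightarrow> real \<Rightarrow> real" where
  "upper_env g a b s = Inf {m * s + c | m c. \<forall>x\<in>{a..b}. g x \<le> m * x + c}"

definition one_sided_deriv :: "(real \<Rightarrow> real) \<Rightarrow> real \<Rightarrow> real set \<Rightarrow> real" where
  "one_sided_deriv E x I = (THE v. (E has_real_derivative v) (at x within I))"

text \<open>The initial velocity is the speed of the left state SL, the final velocity that of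
  the right state SR (these are the smallest and largest speeds in the fan).\<close>
definition Swave_speed :: "(real \<Rightarrow> real \<Rightarrow> real) \<Rightarrow> real \<Rightarrow> real \<Rightarrow> real \<Rightarrow> real \<Rightarrow> real" where
  "Swave_speed f C SL SR s =
     (if SL < SR then one_sided_deriv (lower_env (\<lambda>S. f S C) SL SR) s {SL..SR}
      else if SR < SL then one_sided_deriv (upper_env (\<lambda>S. f S C) SR SL) s {SR..SL}
      else lamS f SL C)"

definition Swave_vi :: "(real \<Rightarrow> real \<Rightarrow> real) \<Rightarrow> real \<times> real \<Rightarrow> real \<times> real \<Rightarrow> real" where
  "Swave_vi f U1 U2 = Swave_speed f (snd U1) (fst U1) (fst U2) (fst U1)"

definition Swave_vf :: "(real \<Rightarrow> real \<Rightarrow> real) \<Rightarrow> real \<times> real \<Rightarrow> real \<times> real \<Rightarrow> real" where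
  "Swave_vf f U1 U2 = Swave_speed f (snd U1) (fst U1) (fst U2) (fst U2)"

definition admissible_Swave :: "real \<times> real \<Rightarrow> real \<times> real \<Rightarrow> bool" where
  "admissible_Swave U1 U2 \<longleftrightarrow> snd U1 = snd U2"

definition Cwave_speed :: "(real \<Rightarrow> real \<Rightarrow> real) \<Rightarrow> real \<Rightarrow> real \<times> real \<Rightarrow> real" where
  "Cwave_speed f A U1 = lamC f A (fst U1) (snd U1)"

definition admissible_Cwave :: "(real \<Rightarrow> real \<Rightarrow> real) \<Rightarrow> real \<Rightarrow> real \<times> real \<Rightarrow> real \<times> real \<Rightarrow> bool" where
  "admissible_Cwave f A U1 U2 \<longleftrightarrow>
     lamC f A (fst U1) (snd U1) = lamC f A (fst U2) (snd U2) \<and>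
     (((inL f A U1 \<or> inT f A U1) \<and> (inL f A U2 \<or> inT f A U2)) \<or>
      ((inR f A U1 \<or> inT f A U1) \<and> (inR f A U2 \<or> inT f A U2)))"

definition compatible_SC :: "(real \<Rightarrow> real \<Rightarrow> real) \<Rightarrow> real \<Rightarrow> real \<times> real \<Rightarrow> real \<times> real \<Rightarrow> real \<times> real \<Rightarrow> bool" where
  "compatible_SC f A UL UM UR \<longleftrightarrow> Swave_vf f UL UM \<le> Cwave_speed f A UM"

end

(*
  Fix the concentration C and put g(S) = f(S,C)/(S+A), the speed of a C-wave at (S,C); it is
  the slope of the line through (-A,0) and (S,f(S,C)).  Since g' = (lamS - g)/(S+A) and S*(C)
  is the only zero of lamS - g in (0,1), g increases strictly on [0,S*] and decreases strictly
  on [S*,1].  The final speed of the S-wave from S_L to S_M is the one-sided derivative at S_M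
  of the lower convex (S_L < S_M) or upper concave (S_M < S_L) envelope of f(.,C), which is the
  supremum of the chord slopes of f from S_M.  Such a chord slope is at most g(S_M) exactly when
  g at its other end lies above g(S_M) (if S_L < S_M) or below it (if S_M < S_L).  So
  compatibility says g(S_M) <= g on [S_L,S_M), resp. g <= g(S_M) on (S_M,S_L], and by the
  unimodality of g this holds iff S_M >= S*, i.e. U_M is in R or T, and S^k(U_M) <= S_L.
*)

theory Submission
  imports Defs
begin

section \<open>Envelopes and their one-sided derivatives\<close>

lemma lower_env_ge_minorant:
  assumes "\<forall>x\<in>{a..b}. m * x + c \<le> h x" and "y \<in> {a..b}"
  shows "m * y + c \<le> lower_env h a b y"
  unfolding lower_env_def
  by (rule cSup_upper) (use assms in \<open>auto intro!: bdd_aboveI[of _ "h y"]\<close>)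

lemma lower_env_le_chord:
  assumes minorant: "\<forall>x\<in>{a..b}. m * x + c \<le> h x"
    and x01: "a \<le> x0" "x0 < x1" "x1 \<le> b" and y: "y \<in> {x0..x1}"
  shows "lower_env h a b y \<le> ((x1 - y) * h x0 + (y - x0) * h x1) / (x1 - x0)"
  unfolding lower_env_def
proof (rule cSup_least)
  show "{m * y + c |m c. \<forall>x\<in>{a..b}. m * x + c \<le> h x} \<noteq> {}"
    using minorant by blast
next
  fix z assume "z \<in> {m * y + c |m c. \<forall>x\<in>{a..b}. m * x + c \<le> h x}"
  then obtain m' c' where z: "z = m' * y + c'" and mc: "\<forall>x\<in>{a..b}. m' * x + c' \<le> h x"
    by blast
  have "(x1 - y) * (m' * x0 + c') + (y - x0) * (m' * x1 + c') \<le> (x1 - y) * h x0 + (y - x0) * h x1"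
    using mc x01 y by (intro add_mono mult_left_mono) auto
  moreover have "(x1 - y) * (m' * x0 + c') + (y - x0) * (m' * x1 + c') = z * (x1 - x0)"
    unfolding z by (simp add: algebra_simps)
  ultimately show "z \<le> ((x1 - y) * h x0 + (y - x0) * h x1) / (x1 - x0)"
    using x01 by (simp add: le_divide_eq)
qed

lemma lower_env_slope_bounds:
  assumes ab: "a < b" and bdd: "bdd_above ((\<lambda>x. (h b - h x) / (b - x)) ` {a..<b})"
  defines "\<sigma> \<equiv> SUP x\<in>{a..<b}. (h b - h x) / (b - x)"
  shows "lower_env h a b b = h b"
    and "\<And>y. y \<in> {a..<b} \<Longrightarrow> (h b - lower_env h a b y) / (b - y) \<le> \<sigma>"
    and "\<And>x0 y. x0 \<in> {a..<b} \<Longrightarrow> y \<in> {x0<..<b} \<Longrightarrow>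
           (h b - h x0) / (b - x0) \<le> (h b - lower_env h a b y) / (b - y)"
proof -
  have slope_le: "(h b - h x) / (b - x) \<le> \<sigma>" if "x \<in> {a..<b}" for x
    unfolding \<sigma>_def using that bdd by (rule cSUP_upper)
  have minorant: "\<forall>x\<in>{a..b}. \<sigma> * x + (h b - \<sigma> * b) \<le> h x"
  proof
    fix x assume x: "x \<in> {a..b}"
    show "\<sigma> * x + (h b - \<sigma> * b) \<le> h x"
    proof (cases "x = b")
      case False
      with x have "h b - h x \<le> \<sigma> * (b - x)"
        using slope_le[of x] by (simp add: divide_le_eq mult.commute)
      then show ?thesis by (simp add: algebra_simps)
    qed simp
  qed
  show "lower_env h a b b = h b"
    using lower_env_ge_minorant[OF minorant, of b] lower_env_le_chord[OF minorant, of a b b] ab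
    by simp
  show "(h b - lower_env h a b y) / (b - y) \<le> \<sigma>" if "y \<in> {a..<b}" for y
    using lower_env_ge_minorant[OF minorant, of y] that by (simp add: divide_le_eq algebra_simps)
  show "(h b - h x0) / (b - x0) \<le> (h b - lower_env h a b y) / (b - y)"
    if "x0 \<in> {a..<b}" "y \<in> {x0<..<b}" for x0 y
  proof -
    have "lower_env h a b y \<le> ((b - y) * h x0 + (y - x0) * h b) / (b - x0)"
      using lower_env_le_chord[OF minorant, of x0 b y] that by auto
    then have "(b - y) * ((h b - h x0) / (b - x0)) \<le> h b - lower_env h a b y"
      using that by (simp add: field_simps)
    then show ?thesis using that by (simp add: le_divide_eq mult.commute)
  qed
qed

lemma lower_env_has_derivative_right_end:
  assumes ab: "a < b" and bdd: "bdd_above ((\<lambda>x. (h b - h x) / (b - x)) ` {a..<b})"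
  defines "\<sigma> \<equiv> SUP x\<in>{a..<b}. (h b - h x) / (b - x)"
  shows "(lower_env h a b has_real_derivative \<sigma>) (at b within {a..b})"
  unfolding has_field_derivative_iff tendsto_iff
proof (intro allI impI)
  let ?E = "lower_env h a b"
  note bounds = lower_env_slope_bounds[OF ab bdd, folded \<sigma>_def]
  fix e :: real assume e: "e > 0"
  have "\<sigma> - e < (SUP x\<in>{a..<b}. (h b - h x) / (b - x))"
    using e unfolding \<sigma>_def by simp
  then obtain x0 where x0: "x0 \<in> {a..<b}" and close: "\<sigma> - e < (h b - h x0) / (b - x0)"
    using ab bdd by (auto simp: less_cSUP_iff)
  show "\<forall>\<^sub>F y in at b within {a..b}. dist ((?E y - ?E b) / (y - b)) \<sigma> < e"
    unfolding eventually_at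
  proof (intro exI[of _ "b - x0"] conjI ballI impI)
    show "b - x0 > 0" using x0 by auto
    fix y assume y: "y \<in> {a..b}" "y \<noteq> b \<and> dist y b < b - x0"
    then have "y \<in> {x0<..<b}" by (auto simp: dist_real_def)
    moreover have "(?E y - ?E b) / (y - b) = (h b - ?E y) / (b - y)"
      using bounds(1) by (metis minus_diff_eq minus_divide_divide)
    ultimately show "dist ((?E y - ?E b) / (y - b)) \<sigma> < e"
      using bounds(2)[of y] bounds(3)[OF x0, of y] close x0 y(1)
      by (auto simp: dist_real_def)
  qed
qed

lemma upper_env_reflect:
  "upper_env h a b y = - lower_env (\<lambda>x. - h (- x)) (- b) (- a) (- y)"
proof -
  have "uminus ` {m * y + c |m c. \<forall>x\<in>{a..b}. h x \<le> m * x + c}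
      = {m * (- y) + c |m c. \<forall>x\<in>{- b..- a}. m * x + c \<le> - h (- x)}"
  proof (intro equalityI subsetI)
    fix z assume "z \<in> uminus ` {m * y + c |m c. \<forall>x\<in>{a..b}. h x \<le> m * x + c}"
    then obtain m c where "z = m * (- y) + (- c)" "\<forall>x\<in>{a..b}. h x \<le> m * x + c"
      by auto
    moreover have "\<forall>x\<in>{- b..- a}. m * x + (- c) \<le> - h (- x)"
    proof
      fix x assume "x \<in> {- b..- a}"
      then have "h (- x) \<le> m * (- x) + c" using calculation(2)[rule_format, of "- x"] by auto
      then show "m * x + (- c) \<le> - h (- x)" by simp
    qed
    ultimately show "z \<in> {m * (- y) + c |m c. \<forall>x\<in>{- b..- a}. m * x + c \<le> - h (- x)}"
      by blast
  next
    fix z assume "z \<in> {m * (- y) + c |m c. \<forall>x\<in>{- b..- a}. m * x + c \<le> - h (- x)}"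
    then obtain m c where "z = - (m * y + (- c))" "\<forall>x\<in>{- b..- a}. m * x + c \<le> - h (- x)"
      by auto
    moreover have "\<forall>x\<in>{a..b}. h x \<le> m * x + (- c)"
    proof
      fix x assume "x \<in> {a..b}"
      then have "m * (- x) + c \<le> - h (- (- x))" using calculation(2)[rule_format, of "- x"] by auto
      then show "h x \<le> m * x + (- c)" by simp
    qed
    ultimately show "z \<in> uminus ` {m * y + c |m c. \<forall>x\<in>{a..b}. h x \<le> m * x + c}"
      by blast
  qed
  then show ?thesis
    unfolding upper_env_def lower_env_def Inf_real_def by simp
qed

lemma upper_env_has_derivative_left_end:
  assumes ab: "a < b" and bdd: "bdd_above ((\<lambda>x. (h x - h a) / (x - a)) ` {a<..b})"
  shows "(upper_env h a b has_real_derivative (SUP x\<in>{a<..b}. (h x - h a) / (x - a)))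
           (at a within {a..b})"
proof -
  define k where "k x = - h (- x)" for x
  have slopes: "(\<lambda>x. (k (- a) - k x) / (- a - x)) ` {- b..<- a}
      = (\<lambda>x. (h x - h a) / (x - a)) ` {a<..b}"
  proof -
    have "(\<lambda>x. (h x - h a) / (x - a)) ` {a<..b}
        = (\<lambda>x. (h x - h a) / (x - a)) ` uminus ` {- b..<- a}"
      by simp
    also have "\<dots> = (\<lambda>x. (k (- a) - k x) / (- a - x)) ` {- b..<- a}"
      unfolding image_image k_def by (intro image_cong refl arg_cong2[where f = "(/)"]) auto
    finally show ?thesis by simp
  qed
  have "(lower_env k (- b) (- a) has_real_derivative (SUP x\<in>{a<..b}. (h x - h a) / (x - a)))
          (at (- a) within uminus ` {a..b})"
    using lower_env_has_derivative_right_end[of "- b" "- a" k] ab bdd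
    by (simp add: slopes)
  from DERIV_image_chain[OF this DERIV_minus[OF DERIV_ident]]
  have "((\<lambda>y. - lower_env k (- b) (- a) (- y)) has_real_derivative
          (SUP x\<in>{a<..b}. (h x - h a) / (x - a))) (at a within {a..b})"
    by (auto dest: DERIV_minus simp: o_def)
  then show ?thesis
    unfolding k_def upper_env_reflect[abs_def] .
qed

lemma one_sided_deriv_eqI:
  assumes "(E has_real_derivative v) (at x within {a..b})" and "a < b" and "x \<in> {a..b}"
  shows "one_sided_deriv E x {a..b} = v"
proof -
  have "at x within {a..b} \<noteq> bot"
    using assms(2,3) by (simp add: trivial_limit_within islimpt_Icc)
  then show ?thesis
    unfolding one_sided_deriv_def using assms(1) has_field_derivative_unique by blast
qed

section \<open>The flux at a fixed concentration\<close>

lemma C2_at_partial_S: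
  assumes "C2_at f (I \<times> J)" and "C \<in> J"
  shows "\<And>S. S \<in> I \<Longrightarrow> ((\<lambda>S. f S C) has_real_derivative lamS f S C) (at S)"
    and "continuous_on I (\<lambda>S. lamS f S C)"
proof -
  obtain F' :: "real \<times> real \<Rightarrow> ((real \<times> real) \<Rightarrow>\<^sub>L real)"
    where F': "\<forall>x\<in>I \<times> J. ((\<lambda>p. f (fst p) (snd p)) has_derivative blinfun_apply (F' x)) (at x)"
      and F'_cont: "continuous_on (I \<times> J) F'"
    using assms(1) unfolding C2_at_def by blast
  have deriv: "((\<lambda>S. f S C) has_real_derivative F' (S, C) (1, 0)) (at S)" if "S \<in> I" for S
  proof -
    have "((\<lambda>p. f (fst p) (snd p)) \<circ> (\<lambda>S. (S, C)) has_derivative F' (S, C) \<circ> (\<lambda>h. (h, 0))) (at S)"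
      using F' that assms(2)
      by (intro diff_chain_at has_derivative_Pair has_derivative_ident has_derivative_const) auto
    moreover have "(\<lambda>p. f (fst p) (snd p)) \<circ> (\<lambda>S. (S, C)) = (\<lambda>S. f S C)"
      by (simp add: comp_def)
    moreover have "F' (S, C) \<circ> (\<lambda>h. (h, 0)) = (*) (F' (S, C) (1, 0))"
    proof
      fix h :: real
      have "F' (S, C) (h *\<^sub>R (1, 0)) = h *\<^sub>R F' (S, C) (1, 0)"
        by (rule blinfun.scaleR_right)
      then show "(F' (S, C) \<circ> (\<lambda>h. (h, 0))) h = F' (S, C) (1, 0) * h"
        by (simp add: mult.commute)
    qed
    ultimately show ?thesis
      unfolding has_field_derivative_def by (simp only:)
  qed
  have lamS_eq: "lamS f S C = F' (S, C) (1, 0)" if "S \<in> I" for S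
    unfolding lamS_def using deriv[OF that] by (rule DERIV_imp_deriv)
  show "\<And>S. S \<in> I \<Longrightarrow> ((\<lambda>S. f S C) has_real_derivative lamS f S C) (at S)"
    using deriv lamS_eq by simp
  have "continuous_on I (\<lambda>S. F' (S, C))"
    by (rule continuous_on_compose2[OF F'_cont]) (use assms(2) in \<open>auto intro!: continuous_intros\<close>)
  then have "continuous_on I (\<lambda>S. F' (S, C) (1, 0))"
    using continuous_on_const by (rule blinfun.continuous_on)
  then show "continuous_on I (\<lambda>S. lamS f S C)"
    by (rule continuous_on_eq) (simp add: lamS_eq)
qed

lemma connected_nonvanishing_pos:
  fixes h :: "'a::topological_space \<Rightarrow> real"
  assumes "connected I" and "continuous_on I h" and "\<forall>t\<in>I. h t \<noteq> 0"
    and "x \<in> I" "0 < h x" and "y \<in> I"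
  shows "0 < h y"
proof (rule ccontr)
  assume "\<not> 0 < h y"
  then have "h y \<le> 0" by simp
  moreover have "connected (h ` I)"
    using assms(2,1) by (rule connected_continuous_image)
  ultimately have "0 \<in> h ` I"
    using assms(4-6) connectedD_interval[of "h ` I" "h y" "h x" 0] by auto
  then show False using assms(3) by auto
qed

lemma chord_slope_le_ray_slope_iff_left:
  fixes p :: "real \<Rightarrow> real"
  assumes "x < s" and "0 < x + A"
  shows "(p s - p x) / (s - x) \<le> p s / (s + A) \<longleftrightarrow> p s / (s + A) \<le> p x / (x + A)"
proof -
  have pos: "0 < s - x" "0 < s + A" using assms by auto
  have "(p s - p x) / (s - x) \<le> p s / (s + A) \<longleftrightarrow> (p s - p x) * (s + A) \<le> p s * (s - x)"
    using pos by (simp add: divide_simps)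
  also have "\<dots> \<longleftrightarrow> p s * (x + A) \<le> p x * (s + A)"
    by (simp add: algebra_simps)
  also have "\<dots> \<longleftrightarrow> p s / (s + A) \<le> p x / (x + A)"
    using pos assms(2) by (simp add: divide_simps)
  finally show ?thesis .
qed

lemma chord_slope_le_ray_slope_iff_right:
  fixes p :: "real \<Rightarrow> real"
  assumes "s < x" and "0 < s + A"
  shows "(p x - p s) / (x - s) \<le> p s / (s + A) \<longleftrightarrow> p x / (x + A) \<le> p s / (s + A)"
proof -
  have pos: "0 < x - s" "0 < x + A" using assms by auto
  have "(p x - p s) / (x - s) \<le> p s / (s + A) \<longleftrightarrow> (p x - p s) * (s + A) \<le> p s * (x - s)"
    using pos assms(2) by (simp add: divide_simps)
  also have "\<dots> \<longleftrightarrow> p x * (s + A) \<le> p s * (x + A)"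
    by (simp add: algebra_simps)
  also have "\<dots> \<longleftrightarrow> p x / (x + A) \<le> p s / (s + A)"
    using pos assms(2) by (simp add: divide_simps)
  finally show ?thesis .
qed

locale fixed_concentration =
  fixes f :: "real \<Rightarrow> real \<Rightarrow> real" and A C :: real
  assumes A_pos: "0 < A" and flux: "flux_hyp f" and C_range: "C \<in> {0..1}"
    and transition_unique: "\<exists>!s. s \<in> {0<..<1} \<and> inT f A (s, C)"
begin

lemma f_has_derivative: "s \<in> {0..1} \<Longrightarrow> ((\<lambda>S. f S C) has_real_derivative lamS f s C) (at s)"
  using flux C_range unfolding flux_hyp_def by (blast intro: C2_at_partial_S(1))

lemma lamS_continuous_on: "continuous_on {0..1} (\<lambda>s. lamS f s C)"
  using flux C_range unfolding flux_hyp_def by (blast intro: C2_at_partial_S(2))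

lemma f_boundary: "f 0 C = 0" "f 1 C = 1" "lamS f 1 C = 0"
  using flux C_range unfolding flux_hyp_def by blast+

lemma f_strict_mono_on: "strict_mono_on {0..1} (\<lambda>S. f S C)"
  using flux C_range unfolding flux_hyp_def by blast

lemma f_pos: "s \<in> {0<..1} \<Longrightarrow> 0 < f s C"
  using strict_mono_onD[OF f_strict_mono_on, of 0 s] f_boundary(1) by simp

lemma lamC_pos: "s \<in> {0<..1} \<Longrightarrow> 0 < lamC f A s C"
  unfolding lamC_def using f_pos A_pos by simp

lemma lamC_zero: "lamC f A 0 C = 0"
  unfolding lamC_def f_boundary by simp

lemma lamC_has_derivative:
  assumes "s \<in> {0..1}"
  shows "((\<lambda>s. lamC f A s C) has_real_derivative (lamS f s C - lamC f A s C) / (s + A)) (at s)"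
proof -
  have "0 < s + A" using assms A_pos by simp
  moreover have "((\<lambda>s. f s C / (s + A)) has_real_derivative
      (lamS f s C * (s + A) - f s C * 1) / ((s + A) * (s + A))) (at s)"
    using calculation f_has_derivative[OF assms]
    by (intro DERIV_divide derivative_eq_intros) auto
  ultimately show ?thesis
    unfolding lamC_def by (simp add: divide_simps)
qed

lemma lamC_continuous_on: "continuous_on {0..1} (\<lambda>s. lamC f A s C)"
  using lamC_has_derivative
  by (intro continuous_at_imp_continuous_on ballI DERIV_isCont) blast

lemma Sstar_transition:
  "Sstar f A C \<in> {0<..<1}" "lamS f (Sstar f A C) C = lamC f A (Sstar f A C) C"
  using theI'[OF transition_unique] unfolding Sstar_def inT_def by auto

lemma transition_eq_Sstar:
  "s \<in> {0<..<1} \<Longrightarrow> lamS f s C = lamC f A s C \<Longrightarrow> s = Sstar f A C"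
  using transition_unique Sstar_transition unfolding inT_def by auto

lemma lamC_less_lamS_below_Sstar:
  assumes "s \<in> {0<..<Sstar f A C}"
  shows "lamC f A s C < lamS f s C"
proof -
  let ?s = "Sstar f A C"
  have s: "0 < ?s" "?s < 1" using Sstar_transition(1) by auto
  \<comment> \<open>\<open>lamC\<close> rises from \<open>0\<close> to a positive value on \<open>[0, S\<^sup>*]\<close>, so its derivative is positive somewhere\<close>
  have deriv: "((\<lambda>s. lamC f A s C) has_real_derivative (lamS f x C - lamC f A x C) / (x + A)) (at x)"
    if "0 \<le> x" "x \<le> ?s" for x
    using that s by (intro lamC_has_derivative) simp
  obtain z where z: "0 < z" "z < ?s"
    and mvt: "lamC f A ?s C - lamC f A 0 C = (?s - 0) * ((lamS f z C - lamC f A z C) / (z + A))"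
    using MVT2[OF s(1) deriv] by blast
  have "0 < ?s * ((lamS f z C - lamC f A z C) / (z + A))"
    using mvt lamC_pos[of ?s] lamC_zero s by simp
  then have "0 < (lamS f z C - lamC f A z C) / (z + A)"
    using s(1) by (rule zero_less_mult_pos)
  then have "0 < lamS f z C - lamC f A z C"
    using z A_pos by (simp add: zero_less_divide_iff)
  moreover have "continuous_on {0<..<?s} (\<lambda>t. lamS f t C - lamC f A t C)"
    using s by (intro continuous_on_diff continuous_on_subset[OF lamS_continuous_on]
        continuous_on_subset[OF lamC_continuous_on]) auto
  moreover have "\<forall>t\<in>{0<..<?s}. lamS f t C - lamC f A t C \<noteq> 0"
  proof
    fix t assume "t \<in> {0<..<?s}"
    then have "t \<in> {0<..<1}" "t \<noteq> ?s" using s by auto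
    then show "lamS f t C - lamC f A t C \<noteq> 0" using transition_eq_Sstar by auto
  qed
  ultimately have "0 < lamS f s C - lamC f A s C"
    using connected_nonvanishing_pos[where I = "{0<..<?s}" and x = z and y = s
        and h = "\<lambda>t. lamS f t C - lamC f A t C"] z assms
    by simp
  then show ?thesis by simp
qed

lemma lamS_less_lamC_above_Sstar:
  assumes "s \<in> {Sstar f A C<..1}"
  shows "lamS f s C < lamC f A s C"
proof -
  let ?s = "Sstar f A C"
  have s: "0 < ?s" "?s < 1" using Sstar_transition(1) by auto
  have "0 < lamC f A 1 C - lamS f 1 C"
    using lamC_pos[of 1] f_boundary(3) by simp
  moreover have "continuous_on {?s<..1} (\<lambda>t. lamC f A t C - lamS f t C)"
    using s by (intro continuous_on_diff continuous_on_subset[OF lamS_continuous_on]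
        continuous_on_subset[OF lamC_continuous_on]) auto
  moreover have "\<forall>t\<in>{?s<..1}. lamC f A t C - lamS f t C \<noteq> 0"
  proof
    fix t assume t: "t \<in> {?s<..1}"
    show "lamC f A t C - lamS f t C \<noteq> 0"
    proof (cases "t = 1")
      case False
      with t s have "t \<in> {0<..<1}" "t \<noteq> ?s" by auto
      then show ?thesis using transition_eq_Sstar by auto
    qed (use lamC_pos[of 1] f_boundary(3) in simp)
  qed
  ultimately have "0 < lamC f A s C - lamS f s C"
    using connected_nonvanishing_pos[where I = "{?s<..1}" and x = 1 and y = s
        and h = "\<lambda>t. lamC f A t C - lamS f t C"] s assms
    by simp
  then show ?thesis by simp
qed

lemma lamC_strict_mono_on: "strict_mono_on {0..Sstar f A C} (\<lambda>s. lamC f A s C)"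
proof (rule strict_mono_onI)
  fix x y assume xy: "x \<in> {0..Sstar f A C}" "y \<in> {0..Sstar f A C}" "x < y"
  have s: "Sstar f A C < 1" using Sstar_transition(1) by auto
  show "lamC f A x C < lamC f A y C"
  proof (rule DERIV_pos_imp_increasing_open[OF xy(3)])
    fix t assume "x < t" "t < y"
    then show "\<exists>l. ((\<lambda>s. lamC f A s C) has_real_derivative l) (at t) \<and> 0 < l"
      using xy s lamC_has_derivative[of t] lamC_less_lamS_below_Sstar[of t] A_pos
      by (intro exI[of _ "(lamS f t C - lamC f A t C) / (t + A)"] conjI)
        (auto simp: zero_less_divide_iff)
  next
    show "continuous_on {x..y} (\<lambda>s. lamC f A s C)"
      using xy s by (intro continuous_on_subset[OF lamC_continuous_on]) auto
  qed
qed

lemma lamC_strict_antimono_on: "strict_antimono_on {Sstar f A C..1} (\<lambda>s. lamC f A s C)"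
proof (rule monotone_onI)
  fix x y assume xy: "x \<in> {Sstar f A C..1}" "y \<in> {Sstar f A C..1}" "x < y"
  have s: "0 < Sstar f A C" using Sstar_transition(1) by auto
  show "lamC f A y C < lamC f A x C"
  proof (rule DERIV_neg_imp_decreasing_open[OF xy(3)])
    fix t assume "x < t" "t < y"
    then show "\<exists>l. ((\<lambda>s. lamC f A s C) has_real_derivative l) (at t) \<and> l < 0"
      using xy s lamC_has_derivative[of t] lamS_less_lamC_above_Sstar[of t] A_pos
      by (intro exI[of _ "(lamS f t C - lamC f A t C) / (t + A)"] conjI)
        (auto simp: divide_neg_pos)
  next
    show "continuous_on {x..y} (\<lambda>s. lamC f A s C)"
      using xy s by (intro continuous_on_subset[OF lamC_continuous_on]) auto
  qed
qed

lemma Sk_Sstar: "Sk f A (Sstar f A C, C) = ereal (Sstar f A C)"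
  unfolding Sk_def by simp

lemma Sk_zero: "Sk f A (0, C) = \<infinity>"
proof -
  have "0 \<noteq> Sstar f A C" using Sstar_transition(1) by auto
  moreover have "lamC f A S' C \<noteq> lamC f A 0 C" if "S' \<in> {0..1}" "S' \<noteq> 0" for S'
    using lamC_pos[of S'] lamC_zero that by auto
  ultimately show ?thesis
    unfolding Sk_def Let_def by auto
qed

lemma Sk_above_Sstar:
  assumes s: "s \<in> {Sstar f A C<..1}"
  obtains s' where "Sk f A (s, C) = ereal s'" "0 \<le> s'" "s' < Sstar f A C"
    "lamC f A s' C = lamC f A s C"
proof -
  let ?s = "Sstar f A C"
  have ss: "0 < ?s" "?s < s" "s \<le> 1" using Sstar_transition(1) s by auto
  have below_top: "lamC f A s C < lamC f A ?s C"
    using monotone_onD[OF lamC_strict_antimono_on, of ?s s] ss by simp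
  obtain s' where s': "0 \<le> s'" "s' \<le> ?s" "lamC f A s' C = lamC f A s C"
    using IVT'[of "\<lambda>s. lamC f A s C" 0 "lamC f A s C" ?s] ss below_top lamC_zero lamC_pos[of s]
      continuous_on_subset[OF lamC_continuous_on, of "{0..?s}"]
    by auto
  with below_top have "s' < ?s" by (auto simp: le_less)
  \<comment> \<open>\<open>lamC\<close> is injective on each side of \<open>S\<^sup>*\<close>, so \<open>s'\<close> is the only other preimage\<close>
  have unique: "t = s'" if t: "t \<in> {0..1}" "t \<noteq> s" "lamC f A t C = lamC f A s C" for t
  proof -
    have "inj_on (\<lambda>s. lamC f A s C) {?s..1}"
      using lamC_strict_antimono_on strict_antimono_iff_antimono by blast
    then have "t < ?s"
      using t ss inj_onD[of "\<lambda>s. lamC f A s C" "{?s..1}" t s] by force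
    moreover have "inj_on (\<lambda>s. lamC f A s C) {0..?s}"
      using lamC_strict_mono_on strict_mono_on_imp_inj_on by blast
    ultimately show "t = s'"
      using t s' \<open>s' < ?s\<close> inj_onD[of "\<lambda>s. lamC f A s C" "{0..?s}" t s'] by force
  qed
  have "(THE t. t \<in> {0..1} \<and> t \<noteq> s \<and> lamC f A t C = lamC f A s C) = s'"
    using unique s' \<open>s' < ?s\<close> ss by (intro the_equality) auto
  moreover have "\<exists>S'\<in>{0..1}. S' \<noteq> s \<and> lamC f A S' C = lamC f A s C"
    using s' \<open>s' < ?s\<close> ss by (intro bexI[of _ s']) auto
  ultimately have "Sk f A (s, C) = ereal s'"
    unfolding Sk_def Let_def using ss by simp
  then show thesis
    using that s' \<open>s' < ?s\<close> by blast
qed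

lemma chord_slopes_bounded:
  obtains B where "\<And>x y. x \<in> {0..1} \<Longrightarrow> y \<in> {0..1} \<Longrightarrow> x < y \<Longrightarrow> (f y C - f x C) / (y - x) \<le> B"
proof -
  have "compact ((\<lambda>t. lamS f t C) ` {0..1})"
    by (rule compact_continuous_image[OF lamS_continuous_on compact_Icc])
  then have "bounded ((\<lambda>t. lamS f t C) ` {0..1})"
    by (rule compact_imp_bounded)
  then obtain B where B: "\<forall>t\<in>{0..1}. \<bar>lamS f t C\<bar> \<le> B"
    unfolding bounded_iff by auto
  show thesis
  proof (rule that)
    fix x y :: real assume xy: "x \<in> {0..1}" "y \<in> {0..1}" "x < y"
    have "\<And>t. x \<le> t \<Longrightarrow> t \<le> y \<Longrightarrow> ((\<lambda>S. f S C) has_real_derivative lamS f t C) (at t)"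
      using xy by (intro f_has_derivative) auto
    from MVT2[OF \<open>x < y\<close> this] obtain z where "x < z" "z < y"
      and "f y C - f x C = (y - x) * lamS f z C"
      by blast
    moreover have "z \<in> {0..1}"
      using \<open>x < z\<close> \<open>z < y\<close> xy by auto
    then have "lamS f z C \<le> B"
      using B abs_le_D1 by blast
    ultimately show "(f y C - f x C) / (y - x) \<le> B"
      using xy by simp
  qed
qed

lemma Swave_vf_le_lamC_iff_increasing:
  assumes "0 \<le> a" "a < s" "s \<le> 1"
  shows "Swave_vf f (a, C) (s, C) \<le> lamC f A s C
    \<longleftrightarrow> (\<forall>x\<in>{a..<s}. lamC f A s C \<le> lamC f A x C)"
proof -
  obtain B where B: "\<And>x y. x \<in> {0..1} \<Longrightarrow> y \<in> {0..1} \<Longrightarrow> x < y \<Longrightarrow>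
      (f y C - f x C) / (y - x) \<le> B"
    using chord_slopes_bounded by blast
  have bdd: "bdd_above ((\<lambda>x. (f s C - f x C) / (s - x)) ` {a..<s})"
    using assms by (intro bdd_aboveI2[of _ _ B] B) auto
  have "one_sided_deriv (lower_env (\<lambda>S. f S C) a s) s {a..s}
      = (SUP x\<in>{a..<s}. (f s C - f x C) / (s - x))"
    using assms(2) by (intro one_sided_deriv_eqI lower_env_has_derivative_right_end bdd) auto
  then have vf: "Swave_vf f (a, C) (s, C) = (SUP x\<in>{a..<s}. (f s C - f x C) / (s - x))"
    unfolding Swave_vf_def Swave_speed_def using assms(2) by simp
  have "Swave_vf f (a, C) (s, C) \<le> lamC f A s C
      \<longleftrightarrow> (\<forall>x\<in>{a..<s}. (f s C - f x C) / (s - x) \<le> f s C / (s + A))"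
    unfolding vf lamC_def using assms(2) bdd by (simp add: cSUP_le_iff)
  also have "\<dots> \<longleftrightarrow> (\<forall>x\<in>{a..<s}. lamC f A s C \<le> lamC f A x C)"
    unfolding lamC_def using assms A_pos
    by (intro ball_cong refl chord_slope_le_ray_slope_iff_left) auto
  finally show ?thesis .
qed

lemma Swave_vf_le_lamC_iff_decreasing:
  assumes "0 \<le> s" "s < a" "a \<le> 1"
  shows "Swave_vf f (a, C) (s, C) \<le> lamC f A s C
    \<longleftrightarrow> (\<forall>x\<in>{s<..a}. lamC f A x C \<le> lamC f A s C)"
proof -
  obtain B where B: "\<And>x y. x \<in> {0..1} \<Longrightarrow> y \<in> {0..1} \<Longrightarrow> x < y \<Longrightarrow>
      (f y C - f x C) / (y - x) \<le> B"
    using chord_slopes_bounded by blast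
  have bdd: "bdd_above ((\<lambda>x. (f x C - f s C) / (x - s)) ` {s<..a})"
    using assms by (intro bdd_aboveI2[of _ _ B] B) auto
  have "one_sided_deriv (upper_env (\<lambda>S. f S C) s a) s {s..a}
      = (SUP x\<in>{s<..a}. (f x C - f s C) / (x - s))"
    using assms(2) by (intro one_sided_deriv_eqI upper_env_has_derivative_left_end bdd) auto
  then have vf: "Swave_vf f (a, C) (s, C) = (SUP x\<in>{s<..a}. (f x C - f s C) / (x - s))"
    unfolding Swave_vf_def Swave_speed_def using assms(2) by simp
  have "Swave_vf f (a, C) (s, C) \<le> lamC f A s C
      \<longleftrightarrow> (\<forall>x\<in>{s<..a}. (f x C - f s C) / (x - s) \<le> f s C / (s + A))"
    unfolding vf lamC_def using assms(2) bdd by (simp add: cSUP_le_iff)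
  also have "\<dots> \<longleftrightarrow> (\<forall>x\<in>{s<..a}. lamC f A x C \<le> lamC f A s C)"
    unfolding lamC_def using assms A_pos
    by (intro ball_cong refl chord_slope_le_ray_slope_iff_right) auto
  finally show ?thesis .
qed

section \<open>Compatibility of an S-wave followed by a C-wave\<close>

lemma lamC_ge_on_interval_iff:
  assumes a: "0 \<le> a" "a < s" and s: "Sstar f A C < s" "s \<le> 1"
    and s': "0 \<le> s'" "s' < Sstar f A C" "lamC f A s' C = lamC f A s C"
  shows "(\<forall>x\<in>{a..<s}. lamC f A s C \<le> lamC f A x C) \<longleftrightarrow> s' \<le> a"
proof
  assume "\<forall>x\<in>{a..<s}. lamC f A s C \<le> lamC f A x C"
  then show "s' \<le> a"
    using strict_mono_onD[OF lamC_strict_mono_on, of a s'] s' a by force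
next
  assume "s' \<le> a"
  show "\<forall>x\<in>{a..<s}. lamC f A s C \<le> lamC f A x C"
  proof
    fix x assume x: "x \<in> {a..<s}"
    show "lamC f A s C \<le> lamC f A x C"
    proof (cases "x \<le> Sstar f A C")
      case True
      then show ?thesis
        using strict_mono_onD[OF lamC_strict_mono_on, of s' x] s' \<open>s' \<le> a\<close> x
        by (cases "s' = x") auto
    next
      case False
      then show ?thesis
        using monotone_onD[OF lamC_strict_antimono_on, of x s] x s by simp
    qed
  qed
qed

lemma Swave_vf_le_lamC_iff_Sk_increasing:
  assumes a: "0 \<le> a" and as: "a < s" and s: "s \<le> 1"
  shows "Swave_vf f (a, C) (s, C) \<le> lamC f A s C
    \<longleftrightarrow> lamS f s C \<le> lamC f A s C \<and> Sk f A (s, C) \<le> ereal a"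
proof -
  let ?s = "Sstar f A C"
  consider "s \<le> ?s" | "?s < s" by linarith
  then have "(\<forall>x\<in>{a..<s}. lamC f A s C \<le> lamC f A x C)
      \<longleftrightarrow> lamS f s C \<le> lamC f A s C \<and> Sk f A (s, C) \<le> ereal a"
  proof cases
    case 1
    then have "\<not> lamS f s C \<le> lamC f A s C \<or> \<not> Sk f A (s, C) \<le> ereal a"
      using lamC_less_lamS_below_Sstar[of s] Sk_Sstar a as by (cases "s = ?s") auto
    moreover have "lamC f A a C < lamC f A s C"
      using strict_mono_onD[OF lamC_strict_mono_on, of a s] a as 1 by simp
    ultimately show ?thesis
      using as by force
  next
    case 2
    obtain s' where s': "Sk f A (s, C) = ereal s'" "0 \<le> s'" "s' < ?s"
      "lamC f A s' C = lamC f A s C"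
      using Sk_above_Sstar[of s] 2 s by auto
    then show ?thesis
      using lamC_ge_on_interval_iff[OF a as 2 s s'(2-4)] lamS_less_lamC_above_Sstar[of s] 2 s
      by simp
  qed
  then show ?thesis
    using Swave_vf_le_lamC_iff_increasing[OF a as s] by simp
qed

lemma Swave_vf_le_lamC_iff_Sk_decreasing:
  assumes s: "0 \<le> s" and sa: "s < a" and a: "a \<le> 1"
  shows "Swave_vf f (a, C) (s, C) \<le> lamC f A s C
    \<longleftrightarrow> lamS f s C \<le> lamC f A s C \<and> Sk f A (s, C) \<le> ereal a"
proof -
  let ?s = "Sstar f A C" and ?g = "\<lambda>s. lamC f A s C"
  consider "?s \<le> s" | "s < ?s" by linarith
  then have "(\<forall>x\<in>{s<..a}. ?g x \<le> ?g s)
      \<longleftrightarrow> lamS f s C \<le> lamC f A s C \<and> Sk f A (s, C) \<le> ereal a"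
  proof cases
    case 1
    have "\<forall>x\<in>{s<..a}. ?g x \<le> ?g s"
    proof
      fix x assume "x \<in> {s<..a}"
      then show "?g x \<le> ?g s"
        using monotone_onD[OF lamC_strict_antimono_on, of s x] 1 a by simp
    qed
    moreover have "lamS f s C \<le> lamC f A s C \<and> Sk f A (s, C) \<le> ereal a"
    proof (cases "s = ?s")
      case True
      then show ?thesis
        using Sstar_transition(2) Sk_Sstar sa by simp
    next
      case False
      then have "?s < s" using 1 by simp
      then obtain s' where "Sk f A (s, C) = ereal s'" "s' < ?s"
        using Sk_above_Sstar[of s] sa a by auto
      then show ?thesis
        using lamS_less_lamC_above_Sstar[of s] \<open>?s < s\<close> sa a by simp
    qed
    ultimately show ?thesis by simp
  next
    case 2
    have "?g s < ?g (min a ?s)"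
      using strict_mono_onD[OF lamC_strict_mono_on, of s "min a ?s"] 2 s sa by simp
    then have "\<not> (\<forall>x\<in>{s<..a}. ?g x \<le> ?g s)"
      using 2 sa by (auto intro!: bexI[of _ "min a ?s"])
    moreover have "\<not> (lamS f s C \<le> lamC f A s C \<and> Sk f A (s, C) \<le> ereal a)"
      using lamC_less_lamS_below_Sstar[of s] Sk_zero 2 s by (cases "s = 0") auto
    ultimately show ?thesis by blast
  qed
  then show ?thesis
    using Swave_vf_le_lamC_iff_decreasing[OF s sa a] by simp
qed

end

theorem lemma3p2:
  fixes f :: "real \<Rightarrow> real \<Rightarrow> real" and A :: real
    and UL UM UR :: "real \<times> real"
  assumes A_pos: "A > 0"
    and flux: "flux_hyp f"
    and Tcurve: "\<forall>C\<in>{0..1}. \<exists>!s. s \<in> {0<..<1} \<and> inT f A (s, C)"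
    and states: "UL \<in> {0..1} \<times> {0..1}" "UM \<in> {0..1} \<times> {0..1}" "UR \<in> {0..1} \<times> {0..1}"
    and Swave: "admissible_Swave UL UM" and Snontriv: "fst UL \<noteq> fst UM"
    and Cwave: "admissible_Cwave f A UM UR"
    and LR: "UL \<noteq> UR"
  shows "compatible_SC f A UL UM UR \<longleftrightarrow>
           ((inR f A UM \<or> inT f A UM) \<and> Sk f A UM \<le> ereal (fst UL) \<and> fst UL \<le> 1)"
proof -
  obtain a s C where UL: "UL = (a, C)" and UM: "UM = (s, C)"
    using Swave unfolding admissible_Swave_def by (metis prod.collapse)
  have a: "0 \<le> a" "a \<le> 1" and s: "0 \<le> s" "s \<le> 1" and C: "C \<in> {0..1}"
    using states(1,2) UL UM by auto
  interpret fixed_concentration f A C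
    using A_pos flux C Tcurve by unfold_locales auto
  have "compatible_SC f A UL UM UR \<longleftrightarrow> Swave_vf f (a, C) (s, C) \<le> lamC f A s C"
    unfolding compatible_SC_def Cwave_speed_def UL UM by simp
  also have "\<dots> \<longleftrightarrow> lamS f s C \<le> lamC f A s C \<and> Sk f A (s, C) \<le> ereal a"
    using Snontriv a s Swave_vf_le_lamC_iff_Sk_increasing Swave_vf_le_lamC_iff_Sk_decreasing
    unfolding UL UM by (cases "a < s") auto
  finally show ?thesis
    unfolding inR_def inT_def UL UM using a by auto
qed

end
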